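(* The left Kan extension $\mathrm{Lan}_{\blacktriangle} \colon \widehat{\Delta} \to \widehat{\overline{\square}}_\vee$ preserves monomorphisms.
   Context: $\mathbf{SLat}$ is the category of (join-)semilattices (sets with an associative, commutative, idempotent binary operation $\vee$) and $\vee$-preserving maps. $\overline{\square}_\vee$ is the full subcategory of $\mathbf{SLat}$ on finite inhabited semilattices whose induced order ($x\le y\iff x\vee y=y$) is a distributive lattice. $\Delta$ is the simplex category of finite nonempty linear orders $[n]$ and monotone maps, and $\blacktriangle\colon \Delta\hookrightarrow\overline{\square}_\vee$ regards $[n]$ as a semilattice with $\vee=\max$. $\widehat{\mathcal C}$ denotes the category of presheaves on $\mathcal C$, and $\mathrm{Lan}_\blacktriangle$ is the left adjoint of restriction along $\blacktriangle$. *)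

theory Defs
  imports "HOL-Library.FuncSet"
begin

text \<open>Object [n] is {..n}; a morphism [m] -> [n] is a monotone map, represented
  extensionally (undefined outside {..m}).\<close>

definition delta_hom :: "nat \<Rightarrow> nat \<Rightarrow> (nat \<Rightarrow> nat) \<Rightarrow> bool" where
  "delta_hom m n f \<longleftrightarrow> f \<in> extensional {..m} \<and> (\<forall>i\<le>m. f i \<le> n)
     \<and> (\<forall>i j. i \<le> j \<and> j \<le> m \<longrightarrow> f i \<le> f j)"

definition delta_presheaf ::
  "(nat \<Rightarrow> 'a set) \<Rightarrow> (nat \<Rightarrow> nat \<Rightarrow> (nat \<Rightarrow> nat) \<Rightarrow> 'a \<Rightarrow> 'a) \<Rightarrow> bool" where
  "delta_presheaf X Xm \<longleftrightarrow>
     (\<forall>m n f. delta_hom m n f \<longrightarrow> (\<forall>x\<in>X n. Xm m n f x \<in> X m))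
   \<and> (\<forall>n. \<forall>x\<in>X n. Xm n n (\<lambda>i\<in>{..n}. i) x = x)
   \<and> (\<forall>m n p f g. delta_hom m n f \<longrightarrow> delta_hom n p g \<longrightarrow>
        (\<forall>x\<in>X p. Xm m p (compose {..m} g f) x = Xm m n f (Xm n p g x)))"

definition delta_nat_trans ::
  "(nat \<Rightarrow> 'a set) \<Rightarrow> (nat \<Rightarrow> nat \<Rightarrow> (nat \<Rightarrow> nat) \<Rightarrow> 'a \<Rightarrow> 'a) \<Rightarrow>
   (nat \<Rightarrow> 'b set) \<Rightarrow> (nat \<Rightarrow> nat \<Rightarrow> (nat \<Rightarrow> nat) \<Rightarrow> 'b \<Rightarrow> 'b) \<Rightarrow>
   (nat \<Rightarrow> 'a \<Rightarrow> 'b) \<Rightarrow> bool" where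
  "delta_nat_trans X Xm Y Ym \<phi> \<longleftrightarrow>
     (\<forall>n. \<forall>x\<in>X n. \<phi> n x \<in> Y n)
   \<and> (\<forall>m n f. delta_hom m n f \<longrightarrow> (\<forall>x\<in>X n. \<phi> m (Xm m n f x) = Ym m n f (\<phi> n x)))"

text \<open>Monomorphisms in a presheaf category are exactly the componentwise injective
  natural transformations.\<close>

definition delta_mono ::
  "(nat \<Rightarrow> 'a set) \<Rightarrow> (nat \<Rightarrow> nat \<Rightarrow> (nat \<Rightarrow> nat) \<Rightarrow> 'a \<Rightarrow> 'a) \<Rightarrow>
   (nat \<Rightarrow> 'b set) \<Rightarrow> (nat \<Rightarrow> nat \<Rightarrow> (nat \<Rightarrow> nat) \<Rightarrow> 'b \<Rightarrow> 'b) \<Rightarrow>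
   (nat \<Rightarrow> 'a \<Rightarrow> 'b) \<Rightarrow> bool" where
  "delta_mono X Xm Y Ym \<phi> \<longleftrightarrow> delta_nat_trans X Xm Y Ym \<phi> \<and> (\<forall>n. inj_on (\<phi> n) (X n))"

definition sl_le :: "('c \<Rightarrow> 'c \<Rightarrow> 'c) \<Rightarrow> 'c \<Rightarrow> 'c \<Rightarrow> bool" where
  "sl_le j x y \<longleftrightarrow> j x y = y"

definition semilattice_on :: "'c set \<Rightarrow> ('c \<Rightarrow> 'c \<Rightarrow> 'c) \<Rightarrow> bool" where
  "semilattice_on S j \<longleftrightarrow>
     (\<forall>x\<in>S. \<forall>y\<in>S. j x y \<in> S)
   \<and> (\<forall>x\<in>S. \<forall>y\<in>S. \<forall>z\<in>S. j (j x y) z = j x (j y z))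
   \<and> (\<forall>x\<in>S. \<forall>y\<in>S. j x y = j y x)
   \<and> (\<forall>x\<in>S. j x x = x)"

definition is_glb_in :: "'c set \<Rightarrow> ('c \<Rightarrow> 'c \<Rightarrow> 'c) \<Rightarrow> 'c \<Rightarrow> 'c \<Rightarrow> 'c \<Rightarrow> bool" where
  "is_glb_in S j x y m \<longleftrightarrow> m \<in> S \<and> sl_le j m x \<and> sl_le j m y
     \<and> (\<forall>z\<in>S. sl_le j z x \<and> sl_le j z y \<longrightarrow> sl_le j z m)"

definition meet_in :: "'c set \<Rightarrow> ('c \<Rightarrow> 'c \<Rightarrow> 'c) \<Rightarrow> 'c \<Rightarrow> 'c \<Rightarrow> 'c" where
  "meet_in S j x y = (THE m. is_glb_in S j x y m)"

definition fin_distrib_slat :: "'c set \<Rightarrow> ('c \<Rightarrow> 'c \<Rightarrow> 'c) \<Rightarrow> bool" where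
  "fin_distrib_slat S j \<longleftrightarrow> finite S \<and> S \<noteq> {} \<and> semilattice_on S j
   \<and> (\<forall>x\<in>S. \<forall>y\<in>S. \<exists>m. is_glb_in S j x y m)
   \<and> (\<forall>x\<in>S. \<forall>y\<in>S. \<forall>z\<in>S.
        meet_in S j x (j y z) = j (meet_in S j x y) (meet_in S j x z))"

definition slat_hom_to_ord :: "'c set \<Rightarrow> ('c \<Rightarrow> 'c \<Rightarrow> 'c) \<Rightarrow> nat \<Rightarrow> ('c \<Rightarrow> nat) \<Rightarrow> bool" where
  "slat_hom_to_ord S j n h \<longleftrightarrow> h \<in> extensional S \<and> (\<forall>x\<in>S. h x \<le> n)
     \<and> (\<forall>x\<in>S. \<forall>y\<in>S. h (j x y) = max (h x) (h y))"

text \<open>(Lan X)(L) is the coend of Hom(L, [n]) x X n: the set of triples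
  (n, h, x) with h : L -> [n] and x in X n, modulo the equivalence relation
  generated by (n, alpha o h, x) ~ (m, h, X(alpha) x) for h : L -> [m],
  alpha : [m] -> [n], x in X n.\<close>

definition lan_elems :: "'c set \<Rightarrow> ('c \<Rightarrow> 'c \<Rightarrow> 'c) \<Rightarrow> (nat \<Rightarrow> 'a set)
   \<Rightarrow> (nat \<times> ('c \<Rightarrow> nat) \<times> 'a) set" where
  "lan_elems S j X = {(n, h, x). slat_hom_to_ord S j n h \<and> x \<in> X n}"

definition lan_gen :: "'c set \<Rightarrow> ('c \<Rightarrow> 'c \<Rightarrow> 'c) \<Rightarrow> (nat \<Rightarrow> 'a set)
   \<Rightarrow> (nat \<Rightarrow> nat \<Rightarrow> (nat \<Rightarrow> nat) \<Rightarrow> 'a \<Rightarrow> 'a)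
   \<Rightarrow> nat \<times> ('c \<Rightarrow> nat) \<times> 'a \<Rightarrow> nat \<times> ('c \<Rightarrow> nat) \<times> 'a \<Rightarrow> bool" where
  "lan_gen S j X Xm p q \<longleftrightarrow> (\<exists>m n h \<alpha> x. slat_hom_to_ord S j m h \<and> delta_hom m n \<alpha>
     \<and> x \<in> X n \<and> p = (n, compose S \<alpha> h, x) \<and> q = (m, h, Xm m n \<alpha> x))"

definition lan_equiv :: "'c set \<Rightarrow> ('c \<Rightarrow> 'c \<Rightarrow> 'c) \<Rightarrow> (nat \<Rightarrow> 'a set)
   \<Rightarrow> (nat \<Rightarrow> nat \<Rightarrow> (nat \<Rightarrow> nat) \<Rightarrow> 'a \<Rightarrow> 'a)
   \<Rightarrow> nat \<times> ('c \<Rightarrow> nat) \<times> 'a \<Rightarrow> nat \<times> ('c \<Rightarrow> nat) \<times> 'a \<Rightarrow> bool" where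
  "lan_equiv S j X Xm = (sup (lan_gen S j X Xm) (lan_gen S j X Xm)\<inverse>\<inverse>)\<^sup>*\<^sup>*"

text \<open>The component at L of Lan(phi) sends [(n,h,x)] to [(n,h,phi n x)];
  it is injective iff the following holds.\<close>

definition lan_component_inj :: "'c set \<Rightarrow> ('c \<Rightarrow> 'c \<Rightarrow> 'c)
   \<Rightarrow> (nat \<Rightarrow> 'a set) \<Rightarrow> (nat \<Rightarrow> nat \<Rightarrow> (nat \<Rightarrow> nat) \<Rightarrow> 'a \<Rightarrow> 'a)
   \<Rightarrow> (nat \<Rightarrow> 'b set) \<Rightarrow> (nat \<Rightarrow> nat \<Rightarrow> (nat \<Rightarrow> nat) \<Rightarrow> 'b \<Rightarrow> 'b)
   \<Rightarrow> (nat \<Rightarrow> 'a \<Rightarrow> 'b) \<Rightarrow> bool" where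
  "lan_component_inj S j X Xm Y Ym \<phi> \<longleftrightarrow>
     (\<forall>(n, h, x)\<in>lan_elems S j X. \<forall>(n', h', x')\<in>lan_elems S j X.
        lan_equiv S j Y Ym (n, h, \<phi> n x) (n', h', \<phi> n' x')
        \<longrightarrow> lan_equiv S j X Xm (n, h, x) (n', h', x'))"

end

theory Submission
  imports Defs
begin

text \<open>Every element [(n, h, x)] of (Lan X)(L) has a canonical representative. Factor
  h : L \<rightarrow> [n] as a surjection e : L \<rightarrow> [k] followed by an injection m : [k] \<rightarrow> [n], and write
  the simplex X(m) x as X(\<sigma>) y with \<sigma> : [k] \<rightarrow> [p] surjective and y nondegenerate
  (Eilenberg-Zilber); the representative is (p, \<sigma> \<circ> e, y). Uniqueness of the
  Eilenberg-Zilber decomposition, together with the diagonal fill-in of surjections against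
  injections, shows that the generating relation of the coend preserves the representative,
  so two elements are identified iff their representatives coincide. A monomorphism \<phi> sends
  nondegenerate simplices to nondegenerate ones, hence representatives to representatives,
  and is injective on them.\<close>

section \<open>Monotone maps between finite ordinals\<close>

abbreviation delta_id :: "nat \<Rightarrow> nat \<Rightarrow> nat" where
  "delta_id n \<equiv> \<lambda>i\<in>{..n}. i"

abbreviation delta_surj :: "nat \<Rightarrow> nat \<Rightarrow> (nat \<Rightarrow> nat) \<Rightarrow> bool" where
  "delta_surj n p \<sigma> \<equiv> delta_hom n p \<sigma> \<and> \<sigma> ` {..n} = {..p}"

lemma delta_hom_mono: "delta_hom m n f \<Longrightarrow> i \<le> i' \<Longrightarrow> i' \<le> m \<Longrightarrow> f i \<le> f i'"
  by (simp add: delta_hom_def)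

lemma delta_hom_le: "delta_hom m n f \<Longrightarrow> i \<le> m \<Longrightarrow> f i \<le> n"
  by (simp add: delta_hom_def)

lemma delta_hom_eqI:
  assumes "delta_hom m n f" "delta_hom m n' g" "\<And>i. i \<le> m \<Longrightarrow> f i = g i"
  shows "f = g"
  using assms by (intro extensionalityI[of f "{..m}"]) (auto simp: delta_hom_def)

lemma delta_hom_compose:
  "delta_hom m n f \<Longrightarrow> delta_hom n p g \<Longrightarrow> delta_hom m p (compose {..m} g f)"
  by (auto simp: delta_hom_def compose_def)

lemma delta_hom_id: "delta_hom n n (delta_id n)"
  by (auto simp: delta_hom_def)

lemma delta_hom_max:
  assumes "delta_hom m n \<alpha>" "a \<le> m" "b \<le> m"
  shows "\<alpha> (max a b) = max (\<alpha> a) (\<alpha> b)"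
proof (cases "a \<le> b")
  case True
  then show ?thesis
    using delta_hom_mono[OF assms(1) True assms(3)] by (simp add: max_def)
next
  case False
  then show ?thesis
    using delta_hom_mono[OF assms(1) _ assms(2), of b] by (simp add: max_def)
qed

lemma delta_surj_compose:
  assumes "delta_surj m n f" "delta_surj n p g"
  shows "delta_surj m p (compose {..m} g f)"
proof -
  have "compose {..m} g f ` {..m} = g ` f ` {..m}"
    by (auto simp: compose_def)
  with assms show ?thesis
    using delta_hom_compose by auto
qed

lemma image_atMost_eq_imp_le: "f ` {..n} = {..q::nat} \<Longrightarrow> q \<le> n"
  using card_image_le[of "{..n}" f] by simp

lemma inj_on_atMost_le:
  "inj_on f {..p} \<Longrightarrow> (\<And>i. i \<le> p \<Longrightarrow> f i \<le> (p'::nat)) \<Longrightarrow> p \<le> p'"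
  using card_inj_on_le[of f "{..p}" "{..p'}"] by auto

lemma delta_hom_inj_strict_mono_on:
  "delta_hom k n m \<Longrightarrow> inj_on m {..k} \<Longrightarrow> strict_mono_on {..k} m"
  by (intro mono_imp_strict_mono) (auto intro: mono_onI simp: delta_hom_def)

lemma delta_hom_inj_endo_eq_id:
  assumes f: "delta_hom p p f" and inj: "inj_on f {..p}" and i: "i \<le> p"
  shows "f i = i"
proof -
  have "card {..i} \<le> card {..f i}"
    using delta_hom_mono[OF f] i by (intro card_inj_on_le[OF inj_on_subset[OF inj]]) auto
  moreover have "card {i..p} \<le> card {f i..p}"
    using delta_hom_mono[OF f] delta_hom_le[OF f]
    by (intro card_inj_on_le[OF inj_on_subset[OF inj]]) auto
  ultimately show ?thesis
    using delta_hom_le[OF f i] i by simp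
qed

lemma delta_surj_endo_eq_id:
  assumes "delta_surj p p f" "i \<le> p"
  shows "f i = i"
  using assms delta_hom_inj_endo_eq_id eq_card_imp_inj_on[of "{..p}" f] by auto

lemma delta_surj_section:
  assumes \<sigma>: "delta_surj n p \<sigma>" and i: "i \<le> n"
  obtains \<delta> where "delta_hom p n \<delta>" "compose {..p} \<sigma> \<delta> = delta_id p" "\<delta> (\<sigma> i) = i"
proof -
  define \<delta> where "\<delta> = (\<lambda>l\<in>{..p}. if l = \<sigma> i then i else (SOME t. t \<le> n \<and> \<sigma> t = l))"
  have \<delta>: "\<delta> l \<le> n \<and> \<sigma> (\<delta> l) = l" if "l \<le> p" for l
  proof (cases "l = \<sigma> i")
    case False
    have "\<exists>t. t \<le> n \<and> \<sigma> t = l"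
      using \<sigma> that by (metis atMost_iff imageE)
    then have "(SOME t. t \<le> n \<and> \<sigma> t = l) \<le> n \<and> \<sigma> (SOME t. t \<le> n \<and> \<sigma> t = l) = l"
      by (rule someI_ex)
    then show ?thesis
      using False that by (simp add: \<delta>_def)
  qed (use that i in \<open>simp add: \<delta>_def\<close>)
  have "\<delta> l \<le> \<delta> l'" if "l \<le> l'" "l' \<le> p" for l l'
  proof (rule ccontr)
    assume "\<not> \<delta> l \<le> \<delta> l'"
    then have "\<sigma> (\<delta> l') \<le> \<sigma> (\<delta> l)"
      using delta_hom_mono[of n p \<sigma> "\<delta> l'" "\<delta> l"] \<sigma> \<delta> that by auto
    then have "l' \<le> l"
      using \<delta> that by simp
    then show False
      using that \<open>\<not> \<delta> l \<le> \<delta> l'\<close> by simp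
  qed
  then have "delta_hom p n \<delta>"
    using \<delta> by (auto simp: delta_hom_def \<delta>_def)
  moreover have "compose {..p} \<sigma> \<delta> = delta_id p"
    using \<delta> by (auto simp: compose_def)
  moreover have "\<delta> (\<sigma> i) = i"
    using delta_hom_le[of n p \<sigma> i] \<sigma> i by (simp add: \<delta>_def)
  ultimately show thesis
    by (rule that)
qed

lemma finite_nat_image_enumeration:
  fixes h :: "'c \<Rightarrow> nat"
  assumes "finite A" "A \<noteq> {}"
  obtains k :: nat and e m where "e \<in> extensional A" "e ` A = {..k}" "m \<in> extensional {..k}"
    "strict_mono_on {..k} m" "m ` {..k} = h ` A" "\<And>a. a \<in> A \<Longrightarrow> m (e a) = h a"
    "\<And>a b. a \<in> A \<Longrightarrow> b \<in> A \<Longrightarrow> e a \<le> e b \<longleftrightarrow> h a \<le> h b"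
proof -
  define xs where "xs = sorted_list_of_set (h ` A)"
  define k where "k = length xs - 1"
  define m where "m = restrict ((!) xs) {..k}"
  define e where "e = restrict (\<lambda>a. the_inv_into {..k} m (h a)) A"
  have set_xs: "set xs = h ` A"
    using assms(1) by (simp add: xs_def)
  then have k: "{..k} = {..<length xs}"
    using assms(2) by (cases xs) (auto simp: k_def)
  have "bij_betw ((!) xs) {..k} (h ` A)"
    using k set_xs by (intro bij_betw_nth) (simp_all add: xs_def)
  then have bij: "bij_betw m {..k} (h ` A)"
    by (rule bij_betw_cong[THEN iffD1, rotated]) (simp add: m_def)
  have sorted: "sorted_wrt (<) xs"
    by (simp add: xs_def strict_sorted_list_of_set)
  have mono: "strict_mono_on {..k} m"
    using sorted_wrt_nth_less[OF sorted] k by (intro strict_mono_onI) (auto simp: m_def)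
  have me: "m (e a) = h a" if "a \<in> A" for a
    using that f_the_inv_into_f_bij_betw[OF bij] by (simp add: e_def)
  have "e ` A = the_inv_into {..k} m ` h ` A"
    by (auto simp: e_def)
  also have "\<dots> = {..k}"
    using bij_betw_the_inv_into[OF bij] by (simp add: bij_betw_def)
  finally have e_range: "e ` A = {..k}" .
  have le_iff: "e a \<le> e b \<longleftrightarrow> h a \<le> h b" if "a \<in> A" "b \<in> A" for a b
    using strict_mono_on_less_eq[OF mono, of "e a" "e b"] e_range that me by auto
  show thesis
  proof (rule that)
    show "e \<in> extensional A"
      by (simp add: e_def)
    show "m \<in> extensional {..k}"
      by (simp add: m_def)
    show "m ` {..k} = h ` A"
      using bij by (simp add: bij_betw_def)
  qed (use e_range mono me le_iff in auto)
qed

lemma strict_mono_on_delta_hom: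
  assumes "strict_mono_on {..k} m" "m \<in> extensional {..k}" "\<And>i. i \<le> k \<Longrightarrow> m i \<le> n"
  shows "delta_hom k n m"
  using assms strict_mono_on_leD[OF assms(1)] by (auto simp: delta_hom_def)

lemma delta_hom_epi_mono_factorization:
  assumes f: "delta_hom p p' f"
  obtains q \<tau> \<mu> where "delta_surj p q \<tau>" "delta_hom q p' \<mu>" "inj_on \<mu> {..q}"
    "f = compose {..p} \<mu> \<tau>"
proof -
  obtain k :: nat and e m where e: "e \<in> extensional {..p}" "e ` {..p} = {..k}"
    and m: "m \<in> extensional {..k}" "strict_mono_on {..k} m" "m ` {..k} = f ` {..p}"
    and me: "\<And>i. i \<le> p \<Longrightarrow> m (e i) = f i"
    and le_iff: "\<And>a b. a \<le> p \<Longrightarrow> b \<le> p \<Longrightarrow> e a \<le> e b \<longleftrightarrow> f a \<le> f b"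
    by (rule finite_nat_image_enumeration[of "{..p}" f]) auto
  have "delta_hom p k e"
    using e le_iff f by (auto simp: delta_hom_def)
  moreover have "delta_hom k p' m"
  proof (rule strict_mono_on_delta_hom[OF m(2,1)])
    fix i assume "i \<le> k"
    then have "m i \<in> f ` {..p}"
      using m(3) by blast
    then show "m i \<le> p'"
      using delta_hom_le[OF f] by auto
  qed
  moreover have "f = compose {..p} m e"
    using f me by (intro extensionalityI[of f "{..p}"]) (auto simp: delta_hom_def compose_def)
  ultimately show thesis
    using e m by (intro that) (auto intro: strict_mono_on_imp_inj_on)
qed

section \<open>Join-preserving maps to finite ordinals\<close>

lemma slat_hom_compose_delta_hom:
  assumes h: "slat_hom_to_ord S j m h" and \<alpha>: "delta_hom m n \<alpha>"
    and closed: "\<forall>x\<in>S. \<forall>y\<in>S. j x y \<in> S"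
  shows "slat_hom_to_ord S j n (compose S \<alpha> h)"
  using h closed delta_hom_max[OF \<alpha>] delta_hom_le[OF \<alpha>]
  by (auto simp: slat_hom_to_ord_def compose_def)

lemma slat_hom_epi_mono_factorization:
  assumes fin: "finite S" "S \<noteq> {}" and closed: "\<forall>x\<in>S. \<forall>y\<in>S. j x y \<in> S"
    and h: "slat_hom_to_ord S j n h"
  obtains k e m where "slat_hom_to_ord S j k e" "e ` S = {..k}" "delta_hom k n m"
    "inj_on m {..k}" "h = compose S m e"
proof -
  obtain k :: nat and e m where e: "e \<in> extensional S" "e ` S = {..k}"
    and m: "m \<in> extensional {..k}" "strict_mono_on {..k} m" "m ` {..k} = h ` S"
    and me: "\<And>a. a \<in> S \<Longrightarrow> m (e a) = h a"
    and le_iff: "\<And>a b. a \<in> S \<Longrightarrow> b \<in> S \<Longrightarrow> e a \<le> e b \<longleftrightarrow> h a \<le> h b"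
    by (rule finite_nat_image_enumeration[OF fin, of h]) auto
  have "e (j x y) = max (e x) (e y)" if "x \<in> S" "y \<in> S" for x y
  proof -
    have "h (j x y) = max (h x) (h y)"
      using h that by (simp add: slat_hom_to_ord_def)
    moreover have "j x y \<in> S"
      using closed that by blast
    ultimately show ?thesis
      using le_iff that by (metis le_antisym max.cobounded1 max.cobounded2 max_def)
  qed
  then have "slat_hom_to_ord S j k e"
    using e by (auto simp: slat_hom_to_ord_def)
  moreover have "delta_hom k n m"
  proof (rule strict_mono_on_delta_hom[OF m(2,1)])
    fix i assume "i \<le> k"
    then have "m i \<in> h ` S"
      using m(3) by blast
    then show "m i \<le> n"
      using h by (auto simp: slat_hom_to_ord_def)
  qed
  moreover have "h = compose S m e"
    using h me by (intro extensionalityI[of h S]) (auto simp: slat_hom_to_ord_def compose_def)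
  ultimately show thesis
    using e m by (intro that) (auto intro: strict_mono_on_imp_inj_on)
qed

lemma factor_through_surj:
  assumes e: "e ` S = {..k::nat}"
    and resp: "\<And>s s'. s \<in> S \<Longrightarrow> s' \<in> S \<Longrightarrow> e s = e s' \<Longrightarrow> f s = f s'"
  obtains \<gamma> where "\<gamma> \<in> extensional {..k}" "\<And>s. s \<in> S \<Longrightarrow> \<gamma> (e s) = f s"
proof
  define \<gamma> where "\<gamma> = (\<lambda>i\<in>{..k}. f (SOME s. s \<in> S \<and> e s = i))"
  show "\<gamma> \<in> extensional {..k}"
    by (simp add: \<gamma>_def)
  fix s assume s: "s \<in> S"
  have "(SOME t. t \<in> S \<and> e t = e s) \<in> S \<and> e (SOME t. t \<in> S \<and> e t = e s) = e s"
    by (rule someI[of _ s]) (simp add: s)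
  moreover have "e s \<le> k"
    using e s by auto
  ultimately show "\<gamma> (e s) = f s"
    using resp[OF _ s] by (simp add: \<gamma>_def)
qed

lemma surj_inj_diagonal_fill:
  assumes e2: "e2 ` S = {..k2}" and e1: "e1 ` S = {..k1}"
    and m1: "delta_hom k1 n m1" "inj_on m1 {..k1}" and g: "delta_hom k2 n g"
    and comm: "\<And>s. s \<in> S \<Longrightarrow> m1 (e1 s) = g (e2 s)"
  obtains \<gamma> where "delta_surj k2 k1 \<gamma>" "compose {..k2} m1 \<gamma> = g"
    "\<And>s. s \<in> S \<Longrightarrow> \<gamma> (e2 s) = e1 s"
proof -
  have "e1 s = e1 s'" if "s \<in> S" "s' \<in> S" "e2 s = e2 s'" for s s'
  proof (rule inj_onD[OF m1(2)])
    show "m1 (e1 s) = m1 (e1 s')"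
      using comm that by simp
    show "e1 s \<in> {..k1}" "e1 s' \<in> {..k1}"
      using e1 that by blast+
  qed
  then obtain \<gamma> where \<gamma>_ext: "\<gamma> \<in> extensional {..k2}" and \<gamma>_e2: "\<And>s. s \<in> S \<Longrightarrow> \<gamma> (e2 s) = e1 s"
    using factor_through_surj[OF e2, of e1] by blast
  have \<gamma>_g: "\<gamma> i \<le> k1 \<and> m1 (\<gamma> i) = g i" if "i \<le> k2" for i
  proof -
    have "i \<in> e2 ` S"
      using e2 that by simp
    then obtain s where "s \<in> S" "e2 s = i"
      by blast
    then show ?thesis
      using \<gamma>_e2 e1 comm by auto
  qed
  have "\<gamma> i \<le> \<gamma> i'" if "i \<le> i'" "i' \<le> k2" for i i'
    using strict_mono_on_less_eq[OF delta_hom_inj_strict_mono_on[OF m1], of "\<gamma> i" "\<gamma> i'"]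
      \<gamma>_g delta_hom_mono[OF g that] that by simp
  then have \<gamma>: "delta_hom k2 k1 \<gamma>"
    using \<gamma>_ext \<gamma>_g by (simp add: delta_hom_def)
  have "\<gamma> ` {..k2} = \<gamma> ` e2 ` S"
    using e2 by simp
  also have "\<dots> = e1 ` S"
    using \<gamma>_e2 by (simp add: image_image cong: image_cong)
  finally have "\<gamma> ` {..k2} = {..k1}"
    using e1 by simp
  moreover have "compose {..k2} m1 \<gamma> = g"
    using \<gamma>_g by (intro delta_hom_eqI[OF delta_hom_compose[OF \<gamma> m1(1)] g]) (simp add: compose_def)
  ultimately show thesis
    using \<gamma> \<gamma>_e2 that by blast
qed

section \<open>The Eilenberg-Zilber lemma\<close>

lemma delta_presheaf_closed:
  "delta_presheaf X Xm \<Longrightarrow> delta_hom m n f \<Longrightarrow> x \<in> X n \<Longrightarrow> Xm m n f x \<in> X m"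
  unfolding delta_presheaf_def by blast

lemma delta_presheaf_id: "delta_presheaf X Xm \<Longrightarrow> x \<in> X n \<Longrightarrow> Xm n n (delta_id n) x = x"
  unfolding delta_presheaf_def by blast

lemma delta_presheaf_compose:
  "delta_presheaf X Xm \<Longrightarrow> delta_hom m n f \<Longrightarrow> delta_hom n p g \<Longrightarrow> x \<in> X p \<Longrightarrow>
    Xm m p (compose {..m} g f) x = Xm m n f (Xm n p g x)"
  unfolding delta_presheaf_def by blast

lemma delta_presheaf_section_cancel:
  assumes "delta_presheaf X Xm" "delta_hom p n \<delta>" "delta_hom n p \<sigma>"
    "compose {..p} \<sigma> \<delta> = delta_id p" "z \<in> X p"
  shows "Xm p n \<delta> (Xm n p \<sigma> z) = z"
  using assms delta_presheaf_compose[of X Xm p n \<delta> p \<sigma> z] delta_presheaf_id by metis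

definition delta_nondegenerate ::
  "(nat \<Rightarrow> 'a set) \<Rightarrow> (nat \<Rightarrow> nat \<Rightarrow> (nat \<Rightarrow> nat) \<Rightarrow> 'a \<Rightarrow> 'a) \<Rightarrow> nat \<Rightarrow> 'a \<Rightarrow> bool" where
  "delta_nondegenerate X Xm p y \<longleftrightarrow> y \<in> X p \<and>
     (\<forall>q \<tau> z. delta_surj p q \<tau> \<and> z \<in> X q \<and> y = Xm p q \<tau> z \<longrightarrow> q = p)"

lemma delta_nondegenerate_in: "delta_nondegenerate X Xm p y \<Longrightarrow> y \<in> X p"
  by (simp add: delta_nondegenerate_def)

lemma eilenberg_zilber_exists:
  assumes ps: "delta_presheaf X Xm"
  shows "x \<in> X n \<Longrightarrow> \<exists>p \<sigma> y. delta_surj n p \<sigma> \<and> delta_nondegenerate X Xm p y \<and> x = Xm n p \<sigma> y"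
proof (induction n arbitrary: x rule: less_induct)
  case (less n)
  show ?case
  proof (cases "delta_nondegenerate X Xm n x")
    case True
    then show ?thesis
      using delta_hom_id delta_presheaf_id[OF ps less.prems] by (intro exI[of _ n]) force
  next
    case False
    then obtain q \<tau> z where \<tau>: "delta_surj n q \<tau>" and z: "z \<in> X q" "x = Xm n q \<tau> z"
      and "q \<noteq> n"
      using less.prems unfolding delta_nondegenerate_def by blast
    then have "q < n"
      using image_atMost_eq_imp_le[of \<tau> n q] by simp
    then obtain p \<sigma> y where \<sigma>: "delta_surj q p \<sigma>" and y: "delta_nondegenerate X Xm p y"
      and z_eq: "z = Xm q p \<sigma> y"
      using less.IH z(1) by blast
    have "x = Xm n p (compose {..n} \<sigma> \<tau>) y"
      using delta_presheaf_compose[OF ps, of n q \<tau> p \<sigma> y] \<tau> \<sigma> z(2) z_eq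
        delta_nondegenerate_in[OF y] by simp
    then show ?thesis
      using delta_surj_compose[OF \<tau> \<sigma>] y by blast
  qed
qed

lemma nondegenerate_restriction_inj:
  assumes ps: "delta_presheaf X Xm" and y: "delta_nondegenerate X Xm p y"
    and f: "delta_hom p p' f" and y': "y' \<in> X p'" and eq: "y = Xm p p' f y'"
  shows "inj_on f {..p}"
proof -
  obtain q \<tau> \<mu> where \<tau>: "delta_surj p q \<tau>" and \<mu>: "delta_hom q p' \<mu>" "inj_on \<mu> {..q}"
    and f_eq: "f = compose {..p} \<mu> \<tau>"
    using delta_hom_epi_mono_factorization[OF f] by blast
  have "y = Xm p q \<tau> (Xm q p' \<mu> y')"
    using eq f_eq delta_presheaf_compose[OF ps _ \<mu>(1) y', of p \<tau>] \<tau> by simp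
  then have "q = p"
    using y \<tau> delta_presheaf_closed[OF ps \<mu>(1) y'] unfolding delta_nondegenerate_def by blast
  then have "f i = \<mu> i" if "i \<le> p" for i
    using delta_surj_endo_eq_id[of p \<tau> i] \<tau> that f_eq by (simp add: compose_def)
  then show ?thesis
    using \<mu>(2) \<open>q = p\<close> inj_on_cong[of "{..p}" f \<mu>] by simp
qed

lemma nondegenerate_section_restriction:
  assumes ps: "delta_presheaf X Xm"
    and \<sigma>: "delta_hom n p \<sigma>" and y: "delta_nondegenerate X Xm p y"
    and \<sigma>': "delta_hom n p' \<sigma>'" and y': "y' \<in> X p'"
    and eq: "Xm n p \<sigma> y = Xm n p' \<sigma>' y'"
    and \<delta>: "delta_hom p n \<delta>" "compose {..p} \<sigma> \<delta> = delta_id p"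
  shows "y = Xm p p' (compose {..p} \<sigma>' \<delta>) y'" "inj_on (compose {..p} \<sigma>' \<delta>) {..p}"
proof -
  have "y = Xm p n \<delta> (Xm n p \<sigma> y)"
    using delta_presheaf_section_cancel[OF ps \<delta>(1) \<sigma> \<delta>(2) delta_nondegenerate_in[OF y]]
    by simp
  also have "\<dots> = Xm p p' (compose {..p} \<sigma>' \<delta>) y'"
    using eq delta_presheaf_compose[OF ps \<delta>(1) \<sigma>' y'] by simp
  finally show y_eq: "y = Xm p p' (compose {..p} \<sigma>' \<delta>) y'" .
  show "inj_on (compose {..p} \<sigma>' \<delta>) {..p}"
    using delta_hom_compose[OF \<delta>(1) \<sigma>'] y' y_eq by (rule nondegenerate_restriction_inj[OF ps y])
qed

lemma eilenberg_zilber_dim_le: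
  assumes ps: "delta_presheaf X Xm"
    and \<sigma>: "delta_surj n p \<sigma>" and y: "delta_nondegenerate X Xm p y"
    and \<sigma>': "delta_hom n p' \<sigma>'" and y': "y' \<in> X p'"
    and eq: "Xm n p \<sigma> y = Xm n p' \<sigma>' y'"
  shows "p \<le> p'"
proof -
  obtain \<delta> where \<delta>: "delta_hom p n \<delta>" "compose {..p} \<sigma> \<delta> = delta_id p"
    using delta_surj_section[OF \<sigma>, of 0] by blast
  have hom: "delta_hom n p \<sigma>"
    using \<sigma> by blast
  show ?thesis
    using nondegenerate_section_restriction(2)[OF ps hom y \<sigma>' y' eq \<delta>]
      delta_hom_le[OF delta_hom_compose[OF \<delta>(1) \<sigma>']]
    by (rule inj_on_atMost_le)
qed

lemma eilenberg_zilber_section_id: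
  assumes ps: "delta_presheaf X Xm"
    and \<sigma>: "delta_hom n p \<sigma>" and y: "delta_nondegenerate X Xm p y"
    and \<sigma>': "delta_hom n p \<sigma>'" and y': "y' \<in> X p"
    and eq: "Xm n p \<sigma> y = Xm n p \<sigma>' y'"
    and \<delta>: "delta_hom p n \<delta>" "compose {..p} \<sigma> \<delta> = delta_id p"
  shows "compose {..p} \<sigma>' \<delta> = delta_id p"
proof (rule delta_hom_eqI)
  show endo: "delta_hom p p (compose {..p} \<sigma>' \<delta>)"
    using \<delta>(1) \<sigma>' by (rule delta_hom_compose)
  have "inj_on (compose {..p} \<sigma>' \<delta>) {..p}"
    by (rule nondegenerate_section_restriction(2)[OF ps \<sigma> y \<sigma>' y' eq \<delta>])
  then show "compose {..p} \<sigma>' \<delta> i = delta_id p i" if "i \<le> p" for i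
    using delta_hom_inj_endo_eq_id[OF endo _ that] that by simp
qed (rule delta_hom_id)

lemma eilenberg_zilber_unique_same_dim:
  assumes ps: "delta_presheaf X Xm"
    and \<sigma>: "delta_surj n p \<sigma>" and y: "delta_nondegenerate X Xm p y"
    and \<sigma>': "delta_hom n p \<sigma>'" and y': "y' \<in> X p"
    and eq: "Xm n p \<sigma> y = Xm n p \<sigma>' y'"
  shows "\<sigma> = \<sigma>'" "y = y'"
proof -
  have hom: "delta_hom n p \<sigma>"
    using \<sigma> by blast
  have section_id: "compose {..p} \<sigma>' \<delta> = delta_id p"
    if "delta_hom p n \<delta>" "compose {..p} \<sigma> \<delta> = delta_id p" for \<delta>
    using hom y \<sigma>' y' eq that by (rule eilenberg_zilber_section_id[OF ps])
  obtain \<delta> where \<delta>: "delta_hom p n \<delta>" "compose {..p} \<sigma> \<delta> = delta_id p"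
    using delta_surj_section[OF \<sigma>, of 0] by blast
  have "y = Xm p p (compose {..p} \<sigma>' \<delta>) y'"
    using hom y \<sigma>' y' eq \<delta> by (rule nondegenerate_section_restriction(1)[OF ps])
  then show "y = y'"
    using section_id[OF \<delta>] delta_presheaf_id[OF ps y'] by simp
  show "\<sigma> = \<sigma>'"
  proof (rule delta_hom_eqI[OF hom \<sigma>'])
    fix i assume "i \<le> n"
    then obtain \<delta>i where \<delta>i: "delta_hom p n \<delta>i" "compose {..p} \<sigma> \<delta>i = delta_id p"
      "\<delta>i (\<sigma> i) = i"
      using delta_surj_section[OF \<sigma>] by blast
    have "\<sigma> i \<le> p"
      using delta_hom_le[OF hom \<open>i \<le> n\<close>] .
    then show "\<sigma> i = \<sigma>' i"
      using fun_cong[OF section_id[OF \<delta>i(1,2)], of "\<sigma> i"] \<delta>i(3) by (simp add: compose_def)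
  qed
qed

lemma eilenberg_zilber_unique:
  assumes ps: "delta_presheaf X Xm"
    and \<sigma>: "delta_surj n p \<sigma>" and y: "delta_nondegenerate X Xm p y"
    and \<sigma>': "delta_surj n p' \<sigma>'" and y': "delta_nondegenerate X Xm p' y'"
    and eq: "Xm n p \<sigma> y = Xm n p' \<sigma>' y'"
  shows "p = p'" "\<sigma> = \<sigma>'" "y = y'"
proof -
  have hom: "delta_hom n p \<sigma>" "delta_hom n p' \<sigma>'"
    using \<sigma> \<sigma>' by blast+
  have yX: "y \<in> X p" "y' \<in> X p'"
    using y y' by (simp_all add: delta_nondegenerate_in)
  show p_eq: "p = p'"
  proof (rule antisym)
    show "p \<le> p'"
      using hom(2) yX(2) eq by (rule eilenberg_zilber_dim_le[OF ps \<sigma> y])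
    show "p' \<le> p"
      using hom(1) yX(1) eq[symmetric] by (rule eilenberg_zilber_dim_le[OF ps \<sigma>' y'])
  qed
  have "delta_hom n p \<sigma>'" "y' \<in> X p" "Xm n p \<sigma> y = Xm n p \<sigma>' y'"
    using hom(2) yX(2) eq unfolding p_eq .
  then show "\<sigma> = \<sigma>'" "y = y'"
    by (rule eilenberg_zilber_unique_same_dim[OF ps \<sigma> y])+
qed

lemma nondegenerate_inj_image:
  assumes psX: "delta_presheaf X Xm" and psY: "delta_presheaf Y Ym"
    and \<phi>: "delta_nat_trans X Xm Y Ym \<phi>" "inj_on (\<phi> p) (X p)"
    and y: "delta_nondegenerate X Xm p y"
  shows "delta_nondegenerate Y Ym p (\<phi> p y)"
proof -
  have yX: "y \<in> X p"
    using y by (rule delta_nondegenerate_in)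
  have natural: "\<phi> m (Xm m n f x) = Ym m n f (\<phi> n x)" if "delta_hom m n f" "x \<in> X n" for m n f x
    using \<phi>(1) that by (simp add: delta_nat_trans_def)
  have "q = p" if \<tau>: "delta_surj p q \<tau>" and z: "z \<in> Y q" and eq: "\<phi> p y = Ym p q \<tau> z" for q \<tau> z
  proof -
    obtain \<delta> where \<delta>: "delta_hom q p \<delta>" "compose {..q} \<tau> \<delta> = delta_id q"
      using delta_surj_section[OF \<tau>, of 0] by blast
    define w where "w = Xm q p \<delta> y"
    have wX: "w \<in> X q"
      unfolding w_def using delta_presheaf_closed[OF psX \<delta>(1) yX] .
    have "z = Ym q p \<delta> (Ym p q \<tau> z)"
      using delta_presheaf_section_cancel[OF psY \<delta>(1) _ \<delta>(2) z] \<tau> by simp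
    also have "\<dots> = \<phi> q w"
      using eq natural[OF \<delta>(1) yX] by (simp add: w_def)
    finally have "\<phi> p y = \<phi> p (Xm p q \<tau> w)"
      using eq natural[OF _ wX, of p \<tau>] \<tau> by simp
    then have "y = Xm p q \<tau> w"
      using \<phi>(2) yX delta_presheaf_closed[OF psX _ wX, of p \<tau>] \<tau> by (auto dest: inj_onD)
    then show "q = p"
      using y \<tau> wX unfolding delta_nondegenerate_def by blast
  qed
  moreover have "\<phi> p y \<in> Y p"
    using \<phi>(1) yX by (simp add: delta_nat_trans_def)
  ultimately show ?thesis
    unfolding delta_nondegenerate_def by blast
qed

section \<open>Normal forms in the coend\<close>

lemma lan_equiv_symclp: "lan_equiv S j X Xm = (symclp (lan_gen S j X Xm))\<^sup>*\<^sup>*"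
  by (simp add: lan_equiv_def symclp_pointfree)

lemma lan_equiv_sym: "lan_equiv S j X Xm a b \<Longrightarrow> lan_equiv S j X Xm b a"
  unfolding lan_equiv_symclp by (rule rtranclp_symclp_sym)

lemma lan_equiv_trans:
  "lan_equiv S j X Xm a b \<Longrightarrow> lan_equiv S j X Xm b c \<Longrightarrow> lan_equiv S j X Xm a c"
  unfolding lan_equiv_def by (rule rtranclp_trans)

lemma lan_gen_imp_lan_equiv: "lan_gen S j X Xm a b \<Longrightarrow> lan_equiv S j X Xm a b"
  unfolding lan_equiv_symclp by (simp add: r_into_rtranclp)

lemma lan_gen_in_lan_elems:
  assumes ps: "delta_presheaf X Xm" and closed: "\<forall>x\<in>S. \<forall>y\<in>S. j x y \<in> S"
    and "lan_gen S j X Xm a b"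
  shows "a \<in> lan_elems S j X" "b \<in> lan_elems S j X"
proof -
  obtain m n h \<alpha> x where "slat_hom_to_ord S j m h" "delta_hom m n \<alpha>" "x \<in> X n"
    "a = (n, compose S \<alpha> h, x)" "b = (m, h, Xm m n \<alpha> x)"
    using assms(3) unfolding lan_gen_def by blast
  then show "a \<in> lan_elems S j X" "b \<in> lan_elems S j X"
    using slat_hom_compose_delta_hom[OF _ _ closed] delta_presheaf_closed[OF ps]
    by (simp_all add: lan_elems_def)
qed

definition lan_normal_form :: "'c set \<Rightarrow> ('c \<Rightarrow> 'c \<Rightarrow> 'c) \<Rightarrow> (nat \<Rightarrow> 'a set)
   \<Rightarrow> (nat \<Rightarrow> nat \<Rightarrow> (nat \<Rightarrow> nat) \<Rightarrow> 'a \<Rightarrow> 'a)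
   \<Rightarrow> nat \<times> ('c \<Rightarrow> nat) \<times> 'a \<Rightarrow> nat \<times> ('c \<Rightarrow> nat) \<times> 'a \<Rightarrow> bool" where
  "lan_normal_form S j X Xm a t \<longleftrightarrow> (\<exists>n h x k e m p \<sigma> y. a = (n, h, x) \<and> x \<in> X n
     \<and> slat_hom_to_ord S j k e \<and> e ` S = {..k} \<and> delta_hom k n m \<and> inj_on m {..k}
     \<and> h = compose S m e \<and> delta_surj k p \<sigma> \<and> delta_nondegenerate X Xm p y
     \<and> Xm k n m x = Xm k p \<sigma> y \<and> t = (p, compose S \<sigma> e, y))"

lemma lan_normal_formE:
  assumes "lan_normal_form S j X Xm (n, h, x) t"
  obtains k e m p \<sigma> y where "x \<in> X n" "slat_hom_to_ord S j k e" "e ` S = {..k}"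
    "delta_hom k n m" "inj_on m {..k}" "h = compose S m e" "delta_surj k p \<sigma>"
    "delta_nondegenerate X Xm p y" "Xm k n m x = Xm k p \<sigma> y" "t = (p, compose S \<sigma> e, y)"
  using assms unfolding lan_normal_form_def by blast

lemma lan_normal_form_exists:
  assumes fin: "finite S" "S \<noteq> {}" and closed: "\<forall>x\<in>S. \<forall>y\<in>S. j x y \<in> S"
    and ps: "delta_presheaf X Xm" and a: "(n, h, x) \<in> lan_elems S j X"
  obtains p g y where "lan_normal_form S j X Xm (n, h, x) (p, g, y)"
proof -
  have h: "slat_hom_to_ord S j n h" and x: "x \<in> X n"
    using a by (simp_all add: lan_elems_def)
  obtain k e m where e: "slat_hom_to_ord S j k e" "e ` S = {..k}"
    and m: "delta_hom k n m" "inj_on m {..k}" and h_eq: "h = compose S m e"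
    using slat_hom_epi_mono_factorization[OF fin closed h] by blast
  obtain p \<sigma> y where "delta_surj k p \<sigma>" "delta_nondegenerate X Xm p y" "Xm k n m x = Xm k p \<sigma> y"
    using eilenberg_zilber_exists[OF ps delta_presheaf_closed[OF ps m(1) x]] by blast
  then show thesis
    using that[of p "compose S \<sigma> e" y] x e m h_eq unfolding lan_normal_form_def by blast
qed

lemma lan_normal_form_nondegenerate:
  "lan_normal_form S j X Xm a (p, g, y) \<Longrightarrow> delta_nondegenerate X Xm p y"
  unfolding lan_normal_form_def by blast

lemma lan_normal_form_lan_equiv:
  assumes "lan_normal_form S j X Xm a t"
  shows "lan_equiv S j X Xm a t"
proof -
  obtain n h x k e m p \<sigma> y where a: "a = (n, h, x)" "x \<in> X n" "slat_hom_to_ord S j k e"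
    "delta_hom k n m" "h = compose S m e" "delta_surj k p \<sigma>" "delta_nondegenerate X Xm p y"
    "Xm k n m x = Xm k p \<sigma> y" "t = (p, compose S \<sigma> e, y)"
    using assms unfolding lan_normal_form_def by blast
  have "lan_gen S j X Xm a (k, e, Xm k n m x)"
    using a unfolding lan_gen_def by blast
  moreover have "lan_gen S j X Xm t (k, e, Xm k n m x)"
    using a delta_nondegenerate_in[OF a(7)] unfolding lan_gen_def by auto
  ultimately show ?thesis
    using lan_gen_imp_lan_equiv lan_equiv_sym lan_equiv_trans by metis
qed

lemma lan_gen_normal_form_eq:
  assumes ps: "delta_presheaf X Xm" and gen: "lan_gen S j X Xm a b"
    and a: "lan_normal_form S j X Xm a t" and b: "lan_normal_form S j X Xm b t'"
  shows "t = t'"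
proof -
  obtain m0 n h \<alpha> x where \<alpha>: "delta_hom m0 n \<alpha>" and x: "x \<in> X n"
    and a_eq: "a = (n, compose S \<alpha> h, x)" and b_eq: "b = (m0, h, Xm m0 n \<alpha> x)"
    using gen unfolding lan_gen_def by blast
  obtain k1 e1 m1 p1 \<sigma>1 y1 where e1: "e1 ` S = {..k1}" and m1: "delta_hom k1 n m1" "inj_on m1 {..k1}"
    and h1: "compose S \<alpha> h = compose S m1 e1" and \<sigma>1: "delta_surj k1 p1 \<sigma>1"
    and y1: "delta_nondegenerate X Xm p1 y1" and eq1: "Xm k1 n m1 x = Xm k1 p1 \<sigma>1 y1"
    and t: "t = (p1, compose S \<sigma>1 e1, y1)"
    using a unfolding a_eq by (elim lan_normal_formE) blast
  obtain k2 e2 m2 p2 \<sigma>2 y2 where e2: "e2 ` S = {..k2}" and m2: "delta_hom k2 m0 m2"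
    and h2: "h = compose S m2 e2" and \<sigma>2: "delta_surj k2 p2 \<sigma>2"
    and y2: "delta_nondegenerate X Xm p2 y2" and eq2: "Xm k2 m0 m2 (Xm m0 n \<alpha> x) = Xm k2 p2 \<sigma>2 y2"
    and t': "t' = (p2, compose S \<sigma>2 e2, y2)"
    using b unfolding b_eq by (elim lan_normal_formE) blast
  have "m1 (e1 s) = compose {..k2} \<alpha> m2 (e2 s)" if "s \<in> S" for s
    using fun_cong[OF h1, of s] h2 e2 that by (auto simp: compose_def)
  then obtain \<gamma> where \<gamma>: "delta_surj k2 k1 \<gamma>" "compose {..k2} m1 \<gamma> = compose {..k2} \<alpha> m2"
    and \<gamma>_e2: "\<And>s. s \<in> S \<Longrightarrow> \<gamma> (e2 s) = e1 s"
    using surj_inj_diagonal_fill[OF e2 e1 m1 delta_hom_compose[OF m2 \<alpha>]] by blast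
  have y1X: "y1 \<in> X p1"
    using y1 by (rule delta_nondegenerate_in)
  have "Xm k2 p2 \<sigma>2 y2 = Xm k2 n (compose {..k2} \<alpha> m2) x"
    using eq2 delta_presheaf_compose[OF ps m2 \<alpha> x] by simp
  also have "\<dots> = Xm k2 k1 \<gamma> (Xm k1 p1 \<sigma>1 y1)"
    using \<gamma> delta_presheaf_compose[OF ps _ m1(1) x, of k2 \<gamma>] eq1 by simp
  also have "\<dots> = Xm k2 p1 (compose {..k2} \<sigma>1 \<gamma>) y1"
    using \<gamma> \<sigma>1 delta_presheaf_compose[OF ps _ _ y1X, of k2 k1 \<gamma> \<sigma>1] by simp
  finally have eq: "Xm k2 p1 (compose {..k2} \<sigma>1 \<gamma>) y1 = Xm k2 p2 \<sigma>2 y2" ..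
  have \<sigma>1\<gamma>: "delta_surj k2 p1 (compose {..k2} \<sigma>1 \<gamma>)"
    using \<gamma>(1) \<sigma>1 by (rule delta_surj_compose)
  have unique: "p1 = p2" "compose {..k2} \<sigma>1 \<gamma> = \<sigma>2" "y1 = y2"
    using eilenberg_zilber_unique[OF ps \<sigma>1\<gamma> y1 \<sigma>2 y2] eq by blast+
  have "compose S \<sigma>1 e1 = compose S \<sigma>2 e2"
    using \<gamma>_e2 e2 unique(2)[symmetric] by (auto simp: compose_def fun_eq_iff)
  then show ?thesis
    using t t' unique(1,3) by simp
qed

lemma lan_normal_form_unique:
  assumes ps: "delta_presheaf X Xm" and closed: "\<forall>x\<in>S. \<forall>y\<in>S. j x y \<in> S"
    and "lan_normal_form S j X Xm a t" "lan_normal_form S j X Xm a t'"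
  shows "t = t'"
proof -
  obtain n h x k e m where a: "a = (n, h, x)" "x \<in> X n" "slat_hom_to_ord S j k e"
    "delta_hom k n m" "h = compose S m e"
    using assms(3) unfolding lan_normal_form_def by blast
  then have h: "slat_hom_to_ord S j n h"
    using slat_hom_compose_delta_hom[OF a(3,4) closed] by simp
  then have "compose S (delta_id n) h = h"
    by (auto simp: compose_def fun_eq_iff slat_hom_to_ord_def extensional_def)
  then have "lan_gen S j X Xm a a"
    unfolding lan_gen_def using a(1,2) h delta_hom_id delta_presheaf_id[OF ps a(2)]
    by (intro exI[of _ n] exI[of _ n] exI[of _ h] exI[of _ "delta_id n"] exI[of _ x]) simp
  then show ?thesis
    using lan_gen_normal_form_eq[OF ps] assms(3,4) by blast
qed

lemma lan_equiv_normal_form_eq: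
  assumes fin: "finite S" "S \<noteq> {}" and closed: "\<forall>x\<in>S. \<forall>y\<in>S. j x y \<in> S"
    and ps: "delta_presheaf X Xm" and equiv: "lan_equiv S j X Xm a b"
    and a: "lan_normal_form S j X Xm a t" and b: "lan_normal_form S j X Xm b t'"
  shows "t = t'"
proof -
  have "(symclp (lan_gen S j X Xm))\<^sup>*\<^sup>* a b"
    using equiv by (simp add: lan_equiv_symclp)
  then show ?thesis
    using b
  proof (induction arbitrary: t' rule: rtranclp_induct)
    case base
    then show ?case
      using lan_normal_form_unique[OF ps closed a] by blast
  next
    case (step b c)
    then have gen: "lan_gen S j X Xm b c \<or> lan_gen S j X Xm c b"
      by (auto elim: symclpE)
    then have "b \<in> lan_elems S j X"
      using lan_gen_in_lan_elems[OF ps closed] by blast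
    then obtain tb where tb: "lan_normal_form S j X Xm b tb"
      using lan_normal_form_exists[OF fin closed ps] by (cases b) metis
    then have "tb = t'"
      using gen lan_gen_normal_form_eq[OF ps] step.prems by metis
    then show ?case
      using step.IH tb by blast
  qed
qed

lemma lan_normal_form_map:
  assumes psX: "delta_presheaf X Xm" and psY: "delta_presheaf Y Ym"
    and \<phi>: "delta_nat_trans X Xm Y Ym \<phi>" and inj: "\<And>n. inj_on (\<phi> n) (X n)"
    and nf: "lan_normal_form S j X Xm (n, h, x) (p, g, y)"
  shows "lan_normal_form S j Y Ym (n, h, \<phi> n x) (p, g, \<phi> p y)"
proof -
  obtain k e m \<sigma> where x: "x \<in> X n" and e: "slat_hom_to_ord S j k e" "e ` S = {..k}"
    and m: "delta_hom k n m" "inj_on m {..k}" "h = compose S m e" and \<sigma>: "delta_surj k p \<sigma>"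
    and y: "delta_nondegenerate X Xm p y" and eq: "Xm k n m x = Xm k p \<sigma> y"
    and g: "g = compose S \<sigma> e"
    using nf by (elim lan_normal_formE) blast
  have natural: "\<phi> m (Xm m n f x) = Ym m n f (\<phi> n x)" if "delta_hom m n f" "x \<in> X n" for m n f x
    using \<phi> that by (simp add: delta_nat_trans_def)
  have "Ym k n m (\<phi> n x) = Ym k p \<sigma> (\<phi> p y)"
    using natural[OF m(1) x] natural[of k p \<sigma> y] \<sigma> delta_nondegenerate_in[OF y] eq by simp
  moreover have "\<phi> n x \<in> Y n"
    using \<phi> x by (simp add: delta_nat_trans_def)
  moreover have "delta_nondegenerate Y Ym p (\<phi> p y)"
    using nondegenerate_inj_image[OF psX psY \<phi> inj y] .
  ultimately show ?thesis
    using e m \<sigma> g unfolding lan_normal_form_def by blast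
qed

theorem mainTheorem9:
  fixes X :: "nat \<Rightarrow> 'a set" and Xm :: "nat \<Rightarrow> nat \<Rightarrow> (nat \<Rightarrow> nat) \<Rightarrow> 'a \<Rightarrow> 'a"
    and Y :: "nat \<Rightarrow> 'b set" and Ym :: "nat \<Rightarrow> nat \<Rightarrow> (nat \<Rightarrow> nat) \<Rightarrow> 'b \<Rightarrow> 'b"
    and \<phi> :: "nat \<Rightarrow> 'a \<Rightarrow> 'b"
    and S :: "'c set" and j :: "'c \<Rightarrow> 'c \<Rightarrow> 'c"
  assumes "delta_presheaf X Xm" and "delta_presheaf Y Ym"
    and "delta_mono X Xm Y Ym \<phi>"
    and "fin_distrib_slat S j"
  shows "lan_component_inj S j X Xm Y Ym \<phi>"
proof -
  have fin: "finite S" "S \<noteq> {}" and closed: "\<forall>x\<in>S. \<forall>y\<in>S. j x y \<in> S"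
    using assms(4) by (simp_all add: fin_distrib_slat_def semilattice_on_def)
  have \<phi>: "delta_nat_trans X Xm Y Ym \<phi>" and inj: "\<And>n. inj_on (\<phi> n) (X n)"
    using assms(3) by (simp_all add: delta_mono_def)
  have "lan_equiv S j X Xm (n, h, x) (n', h', x')"
    if a: "(n, h, x) \<in> lan_elems S j X" and a': "(n', h', x') \<in> lan_elems S j X"
      and equiv: "lan_equiv S j Y Ym (n, h, \<phi> n x) (n', h', \<phi> n' x')" for n h x n' h' x'
  proof -
    obtain p g y where t: "lan_normal_form S j X Xm (n, h, x) (p, g, y)"
      using lan_normal_form_exists[OF fin closed assms(1) a] by blast
    obtain p' g' y' where t': "lan_normal_form S j X Xm (n', h', x') (p', g', y')"
      using lan_normal_form_exists[OF fin closed assms(1) a'] by blast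
    have "(p, g, \<phi> p y) = (p', g', \<phi> p' y')"
      using equiv lan_normal_form_map[OF assms(1,2) \<phi> inj t] lan_normal_form_map[OF assms(1,2) \<phi> inj t']
      by (rule lan_equiv_normal_form_eq[OF fin closed assms(2)])
    moreover have "y \<in> X p" "y' \<in> X p'"
      using t t' by (auto dest!: lan_normal_form_nondegenerate delta_nondegenerate_in)
    ultimately have "(p, g, y) = (p', g', y')"
      using inj by (auto dest: inj_onD)
    then show ?thesis
      using lan_normal_form_lan_equiv[OF t] lan_normal_form_lan_equiv[OF t']
        lan_equiv_sym lan_equiv_trans by metis
  qed
  then show ?thesis
    unfolding lan_component_inj_def by blast
qed

end
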